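(* Let $\sim$ be a congruence on a finitely generated commutative monoid $Q$ and $P\subset Q$ a prime ideal. Then $P$ is an associated prime ideal of $\sim$ if and only if every primary decomposition of $\sim$ (i.e. every expression of $\sim$ as the common refinement of finitely many primary congruences) has a $P$-primary component. Moreover, if $P$ is not associated to $\sim$, then every $P$-primary component in every primary decomposition of $\sim$ is redundant: omitting it leaves another primary decomposition of $\sim$.
   Context: $Q$ is written additively with identity $0$. An element $\infty$ of a commutative monoid $M$ is \emph{nil} if $m+\infty=\infty$ for all $m$; $m$ is \emph{nilpotent} if $nm$ is nil for some $n\in\mathbb N$, \emph{cancellative} if $m+a=m+b\Rightarrow a=b$. An \emph{ideal} of $Q$ is a subset $T$ with $T+Q\subseteq T$ (empty set allowed); an ideal $P\ne Q$ is \emph{prime} if $a+b\in P\Rightarrow a\in P$ or $b\in P$; by convention $\varnothing$ is a prime ideal exactly when $Q$ has no nil. A \emph{congruence} is an equivalence relation $\sim$ on $Q$ with $a\sim b\Rightarrow a+c\sim b+c$; $\bar Q=Q/\sim$, $\bar q$ the class of $q$. Common refinement = intersection in $Q\times Q$. A congruence is \emph{primary} if every element of $\bar Q$ is nilpotent or cancellative, and then \emph{$P$-primary} for the prime $P=\{q:\bar q\text{ nilpotent}\}$. Localization: for a prime $P$, $\bar Q_P$ is the monoid of formal differences $\bar a-\bar u$ ($a\in Q$, $u\in Q\setminus P$) with $\bar a-\bar u=\bar b-\bar v$ iff $\bar w+\bar v+\bar a=\bar w+\bar u+\bar b$ in $\bar Q$ for some $w\in Q\setminus P$; elements $p\in Q$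 have images $\bar p=\bar p-\bar 0$ in $\bar Q_P$. $P$ is an \emph{associated prime ideal} of $\sim$ if the relation on $\bar Q_P$ given by $x\equiv y$ iff $x+\bar p=y+\bar p$ for all $p\in P$ is not the identity relation (for $P=\varnothing$ this relation is the universal one, so $\varnothing$ is associated iff $\bar Q_\varnothing$ has more than one element). *)

theory Defs
  imports Main
begin

text \<open>The commutative monoid Q is the whole type 'a :: comm_monoid_add.
  Congruences are relations on Q given as sets of pairs; the quotient
  Q/R is represented through R itself (classes of q are compared via R).\<close>

inductive_set mon_gen :: "'a::comm_monoid_add set \<Rightarrow> 'a set" for G where
  zero: "0 \<in> mon_gen G"
| gen: "g \<in> G \<Longrightarrow> g \<in> mon_gen G"
| add: "a \<in> mon_gen G \<Longrightarrow> b \<in> mon_gen G \<Longrightarrow> a + b \<in> mon_gen G"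

definition finitely_generated :: "'a::comm_monoid_add itself \<Rightarrow> bool" where
  "finitely_generated _ \<longleftrightarrow> (\<exists>G::'a set. finite G \<and> mon_gen G = UNIV)"

definition nsum :: "nat \<Rightarrow> 'a::comm_monoid_add \<Rightarrow> 'a" where
  "nsum n m = (((+) m) ^^ n) 0"

definition congruence :: "('a::comm_monoid_add \<times> 'a) set \<Rightarrow> bool" where
  "congruence R \<longleftrightarrow> equiv UNIV R \<and> (\<forall>a b c. (a, b) \<in> R \<longrightarrow> (a + c, b + c) \<in> R)"

definition is_ideal :: "'a::comm_monoid_add set \<Rightarrow> bool" where
  "is_ideal T \<longleftrightarrow> (\<forall>t\<in>T. \<forall>q. t + q \<in> T)"

definition has_nil :: "'a::comm_monoid_add itself \<Rightarrow> bool" where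
  "has_nil _ \<longleftrightarrow> (\<exists>z::'a. \<forall>m. m + z = z)"

definition prime_ideal :: "'a::comm_monoid_add set \<Rightarrow> bool" where
  "prime_ideal P \<longleftrightarrow> is_ideal P \<and> P \<noteq> UNIV \<and>
     (\<forall>a b. a + b \<in> P \<longrightarrow> a \<in> P \<or> b \<in> P) \<and>
     (P = {} \<longrightarrow> \<not> has_nil TYPE('a))"

definition quot_nil :: "('a::comm_monoid_add \<times> 'a) set \<Rightarrow> 'a \<Rightarrow> bool" where
  "quot_nil R z \<longleftrightarrow> (\<forall>m. (m + z, z) \<in> R)"

definition quot_nilpotent :: "('a::comm_monoid_add \<times> 'a) set \<Rightarrow> 'a \<Rightarrow> bool" where
  "quot_nilpotent R q \<longleftrightarrow> (\<exists>n. quot_nil R (nsum n q))"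

definition quot_cancellative :: "('a::comm_monoid_add \<times> 'a) set \<Rightarrow> 'a \<Rightarrow> bool" where
  "quot_cancellative R m \<longleftrightarrow> (\<forall>a b. (m + a, m + b) \<in> R \<longrightarrow> (a, b) \<in> R)"

definition primary :: "('a::comm_monoid_add \<times> 'a) set \<Rightarrow> bool" where
  "primary R \<longleftrightarrow> congruence R \<and> (\<forall>q. quot_nilpotent R q \<or> quot_cancellative R q)"

definition P_primary :: "('a::comm_monoid_add \<times> 'a) set \<Rightarrow> 'a set \<Rightarrow> bool" where
  "P_primary R P \<longleftrightarrow> primary R \<and> P = {q. quot_nilpotent R q}"

text \<open>Localization at P: the formal difference a - u (u not in P) is represented
  by the pair (a,u); loc_eq states equality of formal differences in (Q/R)_P.\<close>
definition loc_eq :: "('a::comm_monoid_add \<times> 'a) set \<Rightarrow> 'a set \<Rightarrow> 'a \<times> 'a \<Rightarrow> 'a \<times> 'a \<Rightarrow> bool" where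
  "loc_eq R P x y \<longleftrightarrow> (case x of (a, u) \<Rightarrow> case y of (b, v) \<Rightarrow>
      \<exists>w. w \<notin> P \<and> (w + v + a, w + u + b) \<in> R)"

text \<open>P is associated: the relation x == y iff x + p = y + p for all p in P
  on the localization is not the identity.  Adding the image of p (= p - 0)
  to a - u gives (a+p) - u.\<close>
definition associated_prime :: "('a::comm_monoid_add \<times> 'a) set \<Rightarrow> 'a set \<Rightarrow> bool" where
  "associated_prime R P \<longleftrightarrow> (\<exists>a u b v. u \<notin> P \<and> v \<notin> P \<and>
      (\<forall>p\<in>P. loc_eq R P (a + p, u) (b + p, v)) \<and> \<not> loc_eq R P (a, u) (b, v))"

definition primary_decomposition :: "('a::comm_monoid_add \<times> 'a) set \<Rightarrow> ('a \<times> 'a) set set \<Rightarrow> bool" where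
  "primary_decomposition R \<C> \<longleftrightarrow> finite \<C> \<and> (\<forall>C\<in>\<C>. primary C) \<and> \<Inter>\<C> = R"

end

theory Submission
  imports Defs "HOL.Topological_Spaces" "HOL-Library.Function_Algebras"
begin

text \<open>If \<open>P\<close> is associated, witnessed by \<open>a - u \<noteq> b - v\<close> with \<open>a - u + p = b - v + p\<close> for all
  \<open>p \<in> P\<close>, then every primary component \<open>C\<close> whose prime differs from \<open>P\<close> identifies
  \<open>a - u\<close> and \<open>b - v\<close> after localizing: either some \<open>p \<in> P\<close> is cancellative modulo \<open>C\<close>, or
  some element outside \<open>P\<close> is nilpotent modulo \<open>C\<close>. So if no component were \<open>P\<close>-primary, the
  two would already agree modulo the intersection.

  If \<open>P\<close> is not associated, a \<open>P\<close>-primary component \<open>C\<close> is implied by the others \<open>D\<close>: for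
  \<open>x \<sim>\<^sub>D y\<close>, the set \<open>J\<close> of \<open>t\<close> with \<open>x + t = y + t\<close> in the localization at \<open>P\<close> satisfies
  \<open>t + P \<subseteq> J \<Longrightarrow> t \<in> J\<close> by non-associatedness, and contains every sum of sufficiently many
  elements of \<open>P\<close>, since these are nil modulo \<open>C\<close> (\<open>P\<close> is finitely generated). Descending,
  \<open>0 \<in> J\<close>, and cancelling an element outside \<open>P\<close> modulo \<open>C\<close> gives \<open>x \<sim>\<^sub>C y\<close>. Dropping all
  \<open>P\<close>-primary components from one primary decomposition then gives a decomposition without
  them. Primary decompositions exist by Noetherian induction: congruences on a finitely
  generated monoid satisfy the ascending chain condition, and a non-primary congruence is
  the intersection of two strictly coarser ones.\<close>

lemma nsum_0 [simp]: "nsum 0 m = 0"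
  by (simp add: nsum_def)

lemma nsum_Suc [simp]: "nsum (Suc n) m = m + nsum n m"
  by (simp add: nsum_def)

lemma nsum_add: "nsum (a + b) m = nsum a m + nsum b m"
  by (induction a) (simp_all add: add.assoc)

lemma congruence_refl: "congruence R \<Longrightarrow> (a, a) \<in> R"
  unfolding congruence_def equiv_def refl_on_def by blast

lemma congruence_sym: "congruence R \<Longrightarrow> (a, b) \<in> R \<Longrightarrow> (b, a) \<in> R"
  unfolding congruence_def equiv_def sym_def by blast

lemma congruence_trans: "congruence R \<Longrightarrow> (a, b) \<in> R \<Longrightarrow> (b, c) \<in> R \<Longrightarrow> (a, c) \<in> R"
  unfolding congruence_def equiv_def trans_def by blast

lemma congruence_add_right: "congruence R \<Longrightarrow> (a, b) \<in> R \<Longrightarrow> (a + c, b + c) \<in> R"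
  by (simp add: congruence_def)

lemma congruence_add_left: "congruence R \<Longrightarrow> (a, b) \<in> R \<Longrightarrow> (c + a, c + b) \<in> R"
  using congruence_add_right[of R a b c] by (simp add: add.commute)

lemma congruenceI:
  assumes "\<And>a. (a, a) \<in> R" and "\<And>a b. (a, b) \<in> R \<Longrightarrow> (b, a) \<in> R"
    and "\<And>a b c. (a, b) \<in> R \<Longrightarrow> (b, c) \<in> R \<Longrightarrow> (a, c) \<in> R"
    and "\<And>a b c. (a, b) \<in> R \<Longrightarrow> (a + c, b + c) \<in> R"
  shows "congruence R"
  unfolding congruence_def equiv_def
proof (intro conjI allI impI)
  show "refl_on UNIV R" using assms(1) by (simp add: refl_on_def)
  show "sym R" using assms(2) by (blast intro: symI)
  show "trans R" using assms(3) by (blast intro: transI)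
qed (use assms(4) in auto)

lemma congruence_Inter: "(\<And>C. C \<in> \<C> \<Longrightarrow> congruence C) \<Longrightarrow> congruence (\<Inter>\<C>)"
  by (rule congruenceI) (auto intro: congruence_refl congruence_sym congruence_trans
      congruence_add_right)

lemma quot_nil_add: "congruence C \<Longrightarrow> quot_nil C z \<Longrightarrow> quot_nil C (z + m)"
  unfolding quot_nil_def
  by (metis add.assoc add.commute congruence_sym congruence_trans)

lemma quot_nil_absorbs: "congruence C \<Longrightarrow> quot_nil C z \<Longrightarrow> (z + a, z + b) \<in> C"
  unfolding quot_nil_def
  by (metis add.commute congruence_sym congruence_trans)

lemma prime_ideal_zero: "prime_ideal P \<Longrightarrow> 0 \<notin> P"
  unfolding prime_ideal_def is_ideal_def by (metis UNIV_eq_I add_0)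

lemma prime_ideal_add: "prime_ideal P \<Longrightarrow> a \<notin> P \<Longrightarrow> b \<notin> P \<Longrightarrow> a + b \<notin> P"
  unfolding prime_ideal_def by blast

lemma prime_ideal_nsum: "prime_ideal P \<Longrightarrow> s \<notin> P \<Longrightarrow> nsum n s \<notin> P"
  by (induction n) (simp_all add: prime_ideal_zero prime_ideal_add)

lemma P_primary_cancellative: "P_primary C P \<Longrightarrow> q \<notin> P \<Longrightarrow> quot_cancellative C q"
  unfolding P_primary_def primary_def by blast

lemma P_primary_congruence: "P_primary C P \<Longrightarrow> congruence C"
  unfolding P_primary_def primary_def by blast

section \<open>Associated primes occur in every primary decomposition\<close>

lemma primary_not_P_primary_witness:
  assumes C: "primary C" "\<not> P_primary C P" and P: "prime_ideal P"
    and shift: "\<forall>p\<in>P. \<exists>w. w \<notin> P \<and> (p + (w + x), p + (w + y)) \<in> C"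
  shows "\<exists>w. w \<notin> P \<and> (w + x, w + y) \<in> C"
proof (cases "\<exists>p\<in>P. \<not> quot_nilpotent C p")
  case True
  then obtain p where p: "p \<in> P" "quot_cancellative C p"
    using C(1) unfolding primary_def by blast
  then show ?thesis using shift unfolding quot_cancellative_def by blast
next
  case False
  then obtain s n where "s \<notin> P" "quot_nil C (nsum n s)"
    using C unfolding P_primary_def quot_nilpotent_def by blast
  then show ?thesis
    using C(1) P prime_ideal_nsum quot_nil_absorbs unfolding primary_def by blast
qed

lemma common_witness:
  assumes "finite \<C>" and "prime_ideal P"
    and "\<forall>C\<in>\<C>. congruence C \<and> (\<exists>w. w \<notin> P \<and> (w + x, w + y) \<in> C)"
  shows "\<exists>w. w \<notin> P \<and> (\<forall>C\<in>\<C>. (w + x, w + y) \<in> C)"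
  using assms
proof (induction \<C> rule: finite_induct)
  case empty
  then show ?case using prime_ideal_zero by blast
next
  case (insert C \<C>)
  then obtain w where w: "w \<notin> P" "\<forall>D\<in>\<C>. (w + x, w + y) \<in> D" by auto
  obtain w' where w': "w' \<notin> P" "(w' + x, w' + y) \<in> C" using insert by auto
  have "(w' + w + x, w' + w + y) \<in> D" if "D \<in> insert C \<C>" for D
    using that w w' insert.prems congruence_add_left[of D "w + x" "w + y" w']
      congruence_add_right[of C "w' + x" "w' + y" w]
    by (auto simp: ac_simps)
  moreover have "w' + w \<notin> P" using prime_ideal_add insert.prems w w' by blast
  ultimately show ?case by blast
qed

lemma associated_prime_has_component:
  assumes P: "prime_ideal P" and as: "associated_prime R P"
    and pd: "primary_decomposition R \<C>"
  shows "\<exists>C\<in>\<C>. P_primary C P"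
proof (rule ccontr)
  assume none: "\<not> (\<exists>C\<in>\<C>. P_primary C P)"
  obtain a u b v where eq_shift: "\<forall>p\<in>P. loc_eq R P (a + p, u) (b + p, v)"
    and neq: "\<not> loc_eq R P (a, u) (b, v)"
    using as unfolding associated_prime_def by blast
  have fin: "finite \<C>" and prim: "\<And>C. C \<in> \<C> \<Longrightarrow> primary C" and R: "\<Inter>\<C> = R"
    using pd unfolding primary_decomposition_def by auto
  have "congruence C \<and> (\<exists>w. w \<notin> P \<and> (w + (v + a), w + (u + b)) \<in> C)" if C: "C \<in> \<C>" for C
  proof
    show "congruence C" using prim[OF C] unfolding primary_def ..
    have "R \<subseteq> C" using R C by blast
    then have "\<forall>p\<in>P. \<exists>w. w \<notin> P \<and> (p + (w + (v + a)), p + (w + (u + b))) \<in> C"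
      using eq_shift unfolding loc_eq_def by (fastforce simp: ac_simps)
    then show "\<exists>w. w \<notin> P \<and> (w + (v + a), w + (u + b)) \<in> C"
      using primary_not_P_primary_witness[OF prim[OF C] _ P] none C by blast
  qed
  then obtain w where "w \<notin> P" "\<forall>C\<in>\<C>. (w + (v + a), w + (u + b)) \<in> C"
    using common_witness[OF fin P] by blast
  then have "loc_eq R P (a, u) (b, v)"
    using R unfolding loc_eq_def by (auto simp: add.assoc)
  with neq show False ..
qed

section \<open>Components at non-associated primes are redundant\<close>

lemma prime_ideal_mem_gen_add:
  assumes G: "mon_gen G = UNIV" and P: "prime_ideal P" and "x \<in> P"
  shows "\<exists>g\<in>G \<inter> P. \<exists>r. x = g + r"
proof -
  have "x \<in> mon_gen G" using G by simp
  then show ?thesis using \<open>x \<in> P\<close>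
  proof (induction x rule: mon_gen.induct)
    case zero
    then show ?case using prime_ideal_zero[OF P] by blast
  next
    case (gen g)
    then show ?case by (metis IntI add_0_right)
  next
    case (add a b)
    then consider "a \<in> P" | "b \<in> P" using P unfolding prime_ideal_def by blast
    then show ?case
      by cases (use add.IH in \<open>metis add.assoc add.left_commute\<close>)+
  qed
qed

lemma sum_list_count_decomp: "m \<le> count_list xs g \<Longrightarrow> \<exists>r. sum_list xs = nsum m g + r"
proof (induction xs arbitrary: m)
  case (Cons y ys)
  show ?case
  proof (cases "y = g \<and> m > 0")
    case True
    then obtain r where "sum_list ys = nsum (m - 1) g + r"
      using Cons by fastforce
    then show ?thesis using True by (auto simp: add.assoc intro!: exI[of _ r] dest!: gr0_implies_Suc)
  next
    case False
    then obtain r where "sum_list ys = nsum m g + r"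
      using Cons by (cases "y = g") auto
    then show ?thesis by (metis add.left_commute sum_list.Cons)
  qed
qed simp

lemma quot_nil_sum_list_long:
  assumes C: "congruence C" and H: "finite H" "set gs \<subseteq> H"
    and nil: "\<forall>g\<in>H. quot_nil C (nsum (k g) g)" and long: "sum k H < length gs"
  shows "quot_nil C (sum_list gs)"
proof -
  have "\<exists>g\<in>H. k g \<le> count_list gs g"
  proof (rule ccontr)
    assume "\<not> ?thesis"
    then have "sum (count_list gs) H \<le> sum k H" by (intro sum_mono) auto
    with sum_count_set[OF H(2,1)] long show False by simp
  qed
  then obtain g r where "g \<in> H" "sum_list gs = nsum (k g) g + r"
    using sum_list_count_decomp by blast
  then show ?thesis using nil quot_nil_add[OF C] by simp
qed

text \<open>Every element of \<open>P\<close> is a generator in \<open>P\<close> plus a rest, so by pigeonhole a long sum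
  from \<open>P\<close> contains some generator \<open>g\<close> at least \<open>k g\<close> times, where \<open>k g \<cdot> g\<close> is nil.\<close>
lemma P_primary_nil_bound:
  assumes fg: "finitely_generated TYPE('a::comm_monoid_add)"
    and P: "prime_ideal P" and C: "P_primary C (P :: 'a set)"
  shows "\<exists>N. \<forall>ps. set ps \<subseteq> P \<longrightarrow> length ps = N \<longrightarrow> quot_nil C (sum_list ps)"
proof -
  obtain G :: "'a set" where G: "finite G" "mon_gen G = UNIV"
    using fg unfolding finitely_generated_def by blast
  define H where "H = G \<inter> P"
  have "\<forall>g\<in>H. \<exists>n. quot_nil C (nsum n g)"
    using C unfolding H_def P_primary_def quot_nilpotent_def by blast
  then obtain k where k: "\<forall>g\<in>H. quot_nil C (nsum (k g) g)" by metis
  obtain gen rest where decomp: "\<forall>p\<in>P. gen p \<in> H \<and> p = gen p + rest p"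
    using prime_ideal_mem_gen_add[OF G(2) P] unfolding H_def by metis
  have "quot_nil C (sum_list ps)" if ps: "set ps \<subseteq> P" "length ps = Suc (sum k H)" for ps
  proof -
    have "sum_list ps = sum_list (map (\<lambda>p. gen p + rest p) ps)"
      using ps(1) decomp by (metis (no_types, lifting) map_idI subsetD)
    also have "\<dots> = sum_list (map gen ps) + sum_list (map rest ps)"
      by (rule sum_list_addf)
    finally show ?thesis
      using quot_nil_sum_list_long[OF P_primary_congruence[OF C], of H "map gen ps" k]
        quot_nil_add[OF P_primary_congruence[OF C]] G(1) ps decomp k
      unfolding H_def by auto
  qed
  then show ?thesis by blast
qed

lemma mem_if_long_sums_mem:
  assumes closed: "\<And>t. (\<forall>p\<in>P. t + p \<in> J) \<Longrightarrow> t \<in> J"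
    and long: "\<And>ps. set ps \<subseteq> P \<Longrightarrow> length ps = N \<Longrightarrow> t + sum_list ps \<in> J"
  shows "t \<in> J"
  using long
proof (induction N arbitrary: t)
  case 0
  then show ?case by simp
next
  case (Suc N)
  have "t + p \<in> J" if "p \<in> P" for p
    by (rule Suc.IH) (use Suc.prems[of "p # _"] that in \<open>simp add: add.assoc\<close>)
  then show ?case by (rule closed[rule_format])
qed

lemma P_primary_component_absorbs:
  assumes fg: "finitely_generated TYPE('a::comm_monoid_add)"
    and P: "prime_ideal P" and C: "P_primary C (P :: 'a set)" and D: "congruence D"
    and R: "D \<inter> C = R" and not_assoc: "\<not> associated_prime R P"
  shows "D \<subseteq> C"
proof safe
  fix x y assume xy: "(x, y) \<in> D"
  obtain N where N: "\<forall>ps. set ps \<subseteq> P \<longrightarrow> length ps = N \<longrightarrow> quot_nil C (sum_list ps)"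
    using P_primary_nil_bound[OF fg P C] by blast
  define J where "J = {t. loc_eq R P (x + t, 0) (y + t, 0)}"
  have "0 \<in> J"
  proof (rule mem_if_long_sums_mem)
    show "t \<in> J" if "\<forall>p\<in>P. t + p \<in> J" for t
    proof -
      have "\<forall>p\<in>P. loc_eq R P ((x + t) + p, 0) ((y + t) + p, 0)"
        using that by (simp add: J_def add.assoc)
      then show ?thesis
        using not_assoc prime_ideal_zero[OF P] unfolding J_def associated_prime_def by blast
    qed
    show "0 + sum_list ps \<in> J" if "set ps \<subseteq> P" "length ps = N" for ps
    proof -
      have "(sum_list ps + x, sum_list ps + y) \<in> C"
        using quot_nil_absorbs[OF P_primary_congruence[OF C]] N that by blast
      moreover have "(x + sum_list ps, y + sum_list ps) \<in> D"
        using congruence_add_right[OF D xy] .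
      ultimately have "(x + sum_list ps, y + sum_list ps) \<in> R"
        using R by (auto simp: add.commute)
      then show ?thesis
        using prime_ideal_zero[OF P] unfolding J_def loc_eq_def by auto
    qed
  qed
  then obtain w where "w \<notin> P" "(w + x, w + y) \<in> C"
    using R unfolding J_def loc_eq_def by auto
  then show "(x, y) \<in> C"
    using P_primary_cancellative[OF C] unfolding quot_cancellative_def by blast
qed

lemma primary_decomposition_Diff:
  assumes fg: "finitely_generated TYPE('a::comm_monoid_add)"
    and P: "prime_ideal (P :: 'a set)" and not_assoc: "\<not> associated_prime R P"
    and pd: "primary_decomposition R \<C>" and X: "X \<subseteq> {C\<in>\<C>. P_primary C P}"
  shows "primary_decomposition R (\<C> - X)"
proof -
  have "finite X"
    using X pd finite_subset[of X \<C>] unfolding primary_decomposition_def by blast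
  then show ?thesis using X
  proof (induction X rule: finite_induct)
    case empty
    then show ?case using pd by simp
  next
    case (insert C X)
    have pdX: "primary_decomposition R (\<C> - X)"
      using insert.IH insert.prems by blast
    have C: "C \<in> \<C> - X" "P_primary C P"
      using insert.hyps(2) insert.prems by auto
    let ?D = "\<Inter>(\<C> - X - {C})"
    have D: "congruence ?D"
      using pdX unfolding primary_decomposition_def primary_def
      by (intro congruence_Inter) blast
    have R: "?D \<inter> C = R"
      using pdX C(1) unfolding primary_decomposition_def by blast
    have "?D \<subseteq> C"
      using P_primary_component_absorbs[OF fg P C(2) D R not_assoc] .
    then have "?D = R" using R by blast
    moreover have "\<C> - X - {C} = \<C> - insert C X" by blast
    ultimately show ?case
      using pdX unfolding primary_decomposition_def by auto
  qed
qed

section \<open>Ascending chain condition for congruences\<close>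

lemma nat_incseq_subseq:
  fixes s :: "nat \<Rightarrow> nat"
  obtains f where "strict_mono f" "incseq (\<lambda>n. s (f n))"
proof -
  obtain f where f: "strict_mono f" "monoseq (\<lambda>n. s (f n))"
    using seq_monosub by blast
  show thesis
  proof (cases "incseq (\<lambda>n. s (f n))")
    case True
    with f(1) show thesis by (rule that)
  next
    case False
    then have dec: "decseq (\<lambda>n. s (f n))" using f(2) by (simp add: monoseq_iff)
    obtain N where N: "\<forall>n. s (f N) \<le> s (f n)"
      using ex_has_least_nat[of "\<lambda>_. True" 0 "\<lambda>n. s (f n)"] by blast
    have "s (f (n + N)) = s (f N)" for n
      using N antimonoD[OF dec, of N "n + N"] by (simp add: antisym)
    then have "incseq (\<lambda>n. s (f (n + N)))" by (simp add: mono_def)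
    moreover have "strict_mono (\<lambda>n. f (n + N))"
      using f(1) by (simp add: strict_mono_def)
    ultimately show thesis using that by blast
  qed
qed

lemma dickson_subseq:
  fixes x :: "nat \<Rightarrow> nat \<Rightarrow> nat"
  shows "\<exists>f. strict_mono f \<and> (\<forall>l<k. incseq (\<lambda>n. x (f n) l))"
proof (induction k)
  case 0
  show ?case by (intro exI[of _ "\<lambda>n. n"]) (simp add: strict_mono_def)
next
  case (Suc k)
  then obtain f where f: "strict_mono f" "\<forall>l<k. incseq (\<lambda>n. x (f n) l)" by blast
  obtain g where g: "strict_mono g" "incseq (\<lambda>n. x (f (g n)) k)"
    by (rule nat_incseq_subseq[of "\<lambda>n. x (f n) k"])
  have "incseq (\<lambda>n. x (f (g n)) l)" if "l < Suc k" for l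
  proof (cases "l = k")
    case False
    then have inc: "incseq (\<lambda>n. x (f n) l)" using f(2) that by simp
    show ?thesis
    proof (rule monoI)
      fix m n :: nat assume "m \<le> n"
      then have "g m \<le> g n" by (simp add: strict_mono_less_eq[OF g(1)])
      then show "x (f (g m)) l \<le> x (f (g n)) l" using monoD[OF inc] by simp
    qed
  qed (use g(2) in simp)
  then show ?case
    using strict_mono_o[OF f(1) g(1), unfolded comp_def] by blast
qed

text \<open>Exponent vectors in \<open>\<nat>\<^sup>k\<close> are functions vanishing from \<open>k\<close> on; \<open>+\<close> and \<open>\<le>\<close> are
  pointwise.\<close>
definition exps :: "nat \<Rightarrow> (nat \<Rightarrow> nat) set" where
  "exps k = {a. \<forall>i\<ge>k. a i = 0}"

lemma exps_add: "a \<in> exps k \<Longrightarrow> b \<in> exps k \<Longrightarrow> a + b \<in> exps k"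
  by (simp add: exps_def)

lemma exps_good_pair:
  fixes x :: "nat \<Rightarrow> nat \<Rightarrow> nat"
  assumes "\<forall>n. x n \<in> exps k"
  shows "\<exists>i j. i < j \<and> x i \<le> x j"
proof -
  obtain f where f: "strict_mono f" "\<forall>l<k. incseq (\<lambda>n. x (f n) l)"
    using dickson_subseq[of k x] by blast
  have "x (f 0) l \<le> x (f 1) l" for l
  proof (cases "l < k")
    case True
    then show ?thesis using monoD[of "\<lambda>n. x (f n) l" 0 1] f(2) by simp
  next
    case False
    then show ?thesis using assms by (simp add: exps_def)
  qed
  moreover have "f 0 < f 1" using strict_monoD[OF f(1)] by simp
  ultimately show ?thesis by (auto simp: le_fun_def)
qed

definition exp_ideal :: "nat \<Rightarrow> (nat \<Rightarrow> nat) set \<Rightarrow> bool" where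
  "exp_ideal k J \<longleftrightarrow> J \<subseteq> exps k \<and> (\<forall>a\<in>J. \<forall>c\<in>exps k. a + c \<in> J)"

lemma wf_exp_ideal_supset: "wf {(J', J). J \<subset> J' \<and> exp_ideal k J'}"
  unfolding wf_iff_no_infinite_down_chain
proof
  assume "\<exists>J. \<forall>i. (J (Suc i), J i) \<in> {(J', J). J \<subset> J' \<and> exp_ideal k J'}"
  then obtain J where "\<forall>i. J i \<subset> J (Suc i) \<and> exp_ideal k (J (Suc i))"
    by auto
  then have chain: "\<And>i. J i \<subset> J (Suc i)" "\<And>i. exp_ideal k (J (Suc i))"
    by simp_all
  have "\<forall>i. \<exists>y. y \<in> J (Suc i) - J i" using chain(1) by blast
  then obtain x where x: "\<forall>i. x i \<in> J (Suc i) - J i" by (rule choice[THEN exE])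
  then have exps: "\<forall>i. x i \<in> exps k" using chain(2) unfolding exp_ideal_def by blast
  obtain i j where ij: "i < j" "x i \<le> x j" using exps_good_pair[OF exps] by blast
  then obtain c where c: "x j = x i + c" using le_iff_add by blast
  have "c l = 0" if "l \<ge> k" for l
  proof -
    have "x j l = x i l + c l" using c by simp
    then show ?thesis using exps that unfolding exps_def by simp
  qed
  then have "c \<in> exps k" by (simp add: exps_def)
  then have "x j \<in> J (Suc i)" using x chain(2)[of i] c unfolding exp_ideal_def by simp
  moreover have "J (Suc i) \<subseteq> J j"
    using lift_Suc_mono_le[of J, OF psubset_imp_subset[OF chain(1)]] ij(1) by (simp add: Suc_leI)
  ultimately show False using x by blast
qed

definition lex_less :: "nat \<Rightarrow> (nat \<Rightarrow> nat) \<Rightarrow> (nat \<Rightarrow> nat) \<Rightarrow> bool" where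
  "lex_less k a b \<longleftrightarrow> (\<exists>i<k. a i < b i \<and> (\<forall>j<i. a j = b j))"

lemma lex_less_add_right: "lex_less k a b \<Longrightarrow> lex_less k (a + c) (b + c)"
  by (auto simp: lex_less_def)

lemma lex_less_total:
  assumes "a \<in> exps k" "b \<in> exps k" "a \<noteq> b"
  shows "lex_less k a b \<or> lex_less k b a"
proof -
  define i where "i = (LEAST i. a i \<noteq> b i)"
  have ne: "a i \<noteq> b i" unfolding i_def by (rule LeastI_ex) (use assms(3) in blast)
  have eq: "\<forall>j<i. a j = b j" unfolding i_def using not_less_Least by blast
  have "i < k"
  proof (rule ccontr)
    assume "\<not> i < k"
    then show False using assms(1,2) ne by (simp add: exps_def)
  qed
  then show ?thesis using ne eq unfolding lex_less_def by (metis linorder_neqE_nat)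
qed

lemma wf_lex_less: "wf {(a, b). lex_less k a b}"
proof (rule wf_subset)
  show "wf (inv_image (lex less_than) (\<lambda>a. map a [0..<k]))"
    by (intro wf_inv_image wf_lex wf_less_than)
  show "{(a, b). lex_less k a b} \<subseteq> inv_image (lex less_than) (\<lambda>a. map a [0..<k])"
  proof clarsimp
    fix a b assume "lex_less k a b"
    then obtain i where i: "i < k" "a i < b i" "\<forall>j<i. a j = b j"
      unfolding lex_less_def by blast
    have "[0..<k] = [0..<i] @ i # [Suc i..<k]"
      using upt_add_eq_append[of 0 i "k - i"] upt_conv_Cons[of i k] i(1) by simp
    moreover have "map a [0..<i] = map b [0..<i]" using i(3) by simp
    ultimately show "(map a [0..<k], map b [0..<k]) \<in> lex less_than"
      using i(2) unfolding lex_conv by (auto intro!: exI[of _ "map a [0..<i]"])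
  qed
qed

definition eval_exp :: "(nat \<Rightarrow> 'a::comm_monoid_add) \<Rightarrow> nat \<Rightarrow> (nat \<Rightarrow> nat) \<Rightarrow> 'a" where
  "eval_exp g k a = (\<Sum>i<k. nsum (a i) (g i))"

lemma eval_exp_add: "eval_exp g k (a + b) = eval_exp g k a + eval_exp g k b"
  by (simp add: eval_exp_def nsum_add sum.distrib)

lemma eval_exp_surj:
  assumes "mon_gen (g ` {..<k}) = UNIV"
  shows "\<exists>a\<in>exps k. eval_exp g k a = q"
proof -
  have "q \<in> mon_gen (g ` {..<k})" using assms by simp
  then show ?thesis
  proof (induction q rule: mon_gen.induct)
    case zero
    have "eval_exp g k (\<lambda>_. 0) = 0" by (simp add: eval_exp_def)
    then show ?case by (intro bexI[of _ "\<lambda>_. 0"]) (simp_all add: exps_def)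
  next
    case (gen q)
    then obtain j where j: "j < k" "q = g j" by blast
    let ?a = "\<lambda>i. if i = j then 1 else 0"
    have "eval_exp g k ?a = (\<Sum>i<k. if i = j then g j else 0)"
      unfolding eval_exp_def by (intro sum.cong) auto
    then have "eval_exp g k ?a = q" using j by simp
    moreover have "?a \<in> exps k" using j by (simp add: exps_def)
    ultimately show ?case by blast
  next
    case (add q r)
    then show ?case using eval_exp_add exps_add by metis
  qed
qed

text \<open>A congruence is determined by the lexicographically minimal representatives of its
  classes, so a strictly ascending chain of congruences gives a strictly ascending chain of
  the monomial ideals of non-minimal exponents, which Dickson's lemma forbids.\<close>
definition nonstandard :: "(nat \<Rightarrow> 'a::comm_monoid_add) \<Rightarrow> nat \<Rightarrow> ('a \<times> 'a) set \<Rightarrow> (nat \<Rightarrow> nat) set" where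
  "nonstandard g k S =
     {a \<in> exps k. \<exists>b\<in>exps k. lex_less k b a \<and> (eval_exp g k a, eval_exp g k b) \<in> S}"

lemma exp_ideal_nonstandard:
  assumes S: "congruence S"
  shows "exp_ideal k (nonstandard g k S)"
  unfolding exp_ideal_def
proof safe
  fix a c assume a: "a \<in> nonstandard g k S" and c: "c \<in> exps k"
  then obtain b where b: "a \<in> exps k" "b \<in> exps k" "lex_less k b a"
    "(eval_exp g k a, eval_exp g k b) \<in> S"
    unfolding nonstandard_def by blast
  have "(eval_exp g k (a + c), eval_exp g k (b + c)) \<in> S"
    using congruence_add_right[OF S b(4)] by (simp add: eval_exp_add)
  then show "a + c \<in> nonstandard g k S"
    using b c exps_add lex_less_add_right unfolding nonstandard_def by blast
qed (simp add: nonstandard_def)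

lemma nonstandard_mono: "S \<subseteq> S' \<Longrightarrow> nonstandard g k S \<subseteq> nonstandard g k S'"
  unfolding nonstandard_def by blast

lemma standard_representative:
  assumes gen: "mon_gen (g ` {..<k}) = UNIV" and S: "congruence S"
  shows "\<exists>a\<in>exps k. (eval_exp g k a, q) \<in> S \<and> a \<notin> nonstandard g k S"
proof -
  let ?A = "{a\<in>exps k. (eval_exp g k a, q) \<in> S}"
  obtain a where "a \<in> exps k" "eval_exp g k a = q" using eval_exp_surj[OF gen] by blast
  then have "a \<in> ?A" using congruence_refl[OF S] by simp
  then obtain a0 where a0: "a0 \<in> ?A" and min: "\<And>b. lex_less k b a0 \<Longrightarrow> b \<notin> ?A"
    using wfE_min[OF wf_lex_less] by (metis (no_types, lifting) case_prodI mem_Collect_eq)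
  have "a0 \<notin> nonstandard g k S"
    using a0 min congruence_sym[OF S] congruence_trans[OF S]
    unfolding nonstandard_def by blast
  with a0 show ?thesis by blast
qed

lemma congruence_subset_if_nonstandard_subset:
  assumes gen: "mon_gen (g ` {..<k}) = UNIV"
    and S: "congruence S" and S': "congruence S'" and sub: "S \<subseteq> S'"
    and ns: "nonstandard g k S' \<subseteq> nonstandard g k S"
  shows "S' \<subseteq> S"
proof safe
  fix x y assume xy: "(x, y) \<in> S'"
  obtain a where a: "a \<in> exps k" "(eval_exp g k a, x) \<in> S" "a \<notin> nonstandard g k S'"
    using standard_representative[OF gen S] ns by blast
  obtain b where b: "b \<in> exps k" "(eval_exp g k b, y) \<in> S" "b \<notin> nonstandard g k S'"
    using standard_representative[OF gen S] ns by blast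
  have "(eval_exp g k a, eval_exp g k b) \<in> S'"
    using a(2) b(2) xy sub congruence_sym[OF S'] congruence_trans[OF S'] by blast
  then have "a = b"
    using lex_less_total[OF a(1) b(1)] a b congruence_sym[OF S']
    unfolding nonstandard_def by blast
  then show "(x, y) \<in> S"
    using a(2) b(2) congruence_sym[OF S] congruence_trans[OF S] by blast
qed

theorem wf_congruence_supset:
  assumes "finitely_generated TYPE('a::comm_monoid_add)"
  shows "wf {(S', S::('a \<times> 'a) set). congruence S \<and> congruence S' \<and> S \<subset> S'}"
proof -
  obtain G :: "'a set" where G: "finite G" "mon_gen G = UNIV"
    using assms unfolding finitely_generated_def by blast
  then obtain k and g :: "nat \<Rightarrow> 'a" where "G = g ` {..<k}"
    unfolding finite_conv_nat_seg_image lessThan_def by blast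
  with G(2) have gen: "mon_gen (g ` {..<k}) = UNIV" by simp
  have "wf (inv_image {(J', J). J \<subset> J' \<and> exp_ideal k J'} (nonstandard g k))"
    using wf_exp_ideal_supset by (rule wf_inv_image)
  moreover have "{(S', S::('a \<times> 'a) set). congruence S \<and> congruence S' \<and> S \<subset> S'}
      \<subseteq> inv_image {(J', J). J \<subset> J' \<and> exp_ideal k J'} (nonstandard g k)"
  proof
    fix p assume "p \<in> {(S', S::('a \<times> 'a) set). congruence S \<and> congruence S' \<and> S \<subset> S'}"
    then obtain S S' where p: "p = (S', S)" and S: "congruence S" "congruence S'" "S \<subset> S'"
      by blast
    have "nonstandard g k S \<subseteq> nonstandard g k S'"
      using nonstandard_mono S(3) by blast
    moreover have "\<not> nonstandard g k S' \<subseteq> nonstandard g k S"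
      using congruence_subset_if_nonstandard_subset[OF gen S(1,2)] S(3) by blast
    ultimately show "p \<in> inv_image {(J', J). J \<subset> J' \<and> exp_ideal k J'} (nonstandard g k)"
      using exp_ideal_nonstandard[OF S(2)] p by auto
  qed
  ultimately show ?thesis by (rule wf_subset)
qed

section \<open>Existence of primary decompositions\<close>

definition cong_colon :: "('a::comm_monoid_add \<times> 'a) set \<Rightarrow> 'a \<Rightarrow> ('a \<times> 'a) set" where
  "cong_colon R c = {(a, b). (a + c, b + c) \<in> R}"

lemma congruence_cong_colon:
  assumes R: "congruence R"
  shows "congruence (cong_colon R c)"
proof (rule congruenceI)
  fix a b d
  show "(a, a) \<in> cong_colon R c"
    using congruence_refl[OF R] by (simp add: cong_colon_def)
  show "(b, a) \<in> cong_colon R c" if "(a, b) \<in> cong_colon R c"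
    using that congruence_sym[OF R] by (simp add: cong_colon_def)
  show "(a, d) \<in> cong_colon R c" if "(a, b) \<in> cong_colon R c" "(b, d) \<in> cong_colon R c"
    using that congruence_trans[OF R] by (simp add: cong_colon_def)
  show "(a + d, b + d) \<in> cong_colon R c" if "(a, b) \<in> cong_colon R c"
    using that congruence_add_right[OF R, of "a + c" "b + c" d] by (simp add: cong_colon_def ac_simps)
qed

lemma cong_colon_add: "cong_colon R (c + d) = cong_colon (cong_colon R c) d"
  by (simp add: cong_colon_def ac_simps)

lemma subset_cong_colon: "congruence R \<Longrightarrow> R \<subseteq> cong_colon R c"
  unfolding cong_colon_def by (auto intro: congruence_add_right)

lemma cong_colon_mono: "congruence R \<Longrightarrow> cong_colon R c \<subseteq> cong_colon R (c + d)"
  unfolding cong_colon_def by (auto simp: add.assoc[symmetric] intro: congruence_add_right)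

lemma cong_colon_stable:
  assumes fg: "finitely_generated TYPE('a::comm_monoid_add)" and R: "congruence R"
  shows "\<exists>n>0. cong_colon R (nsum (n + n) q) = cong_colon R (nsum n (q::'a))"
proof -
  define A where "A n = cong_colon R (nsum n q)" for n
  have A_Suc: "A (Suc n) = cong_colon (A n) q" for n
    unfolding A_def nsum_Suc by (subst add.commute) (rule cong_colon_add)
  have "\<exists>N. A (Suc N) = A N"
  proof (rule ccontr)
    assume "\<nexists>N. A (Suc N) = A N"
    moreover have "A n \<subseteq> A (Suc n)" for n
      unfolding A_def using cong_colon_mono[OF R, of "nsum n q" q] by (simp add: add.commute)
    ultimately have "\<forall>i. (A (Suc i), A i)
        \<in> {(S', S). congruence S \<and> congruence S' \<and> S \<subset> S'}"
      using congruence_cong_colon[OF R] unfolding A_def by blast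
    then show False
      using wf_congruence_supset[OF fg] unfolding wf_iff_no_infinite_down_chain by blast
  qed
  then obtain N where N: "A (Suc N) = A N" by blast
  have stable: "A (m + N) = A N" for m
    by (induction m) (simp_all add: A_Suc N[unfolded A_Suc])
  have "A (Suc N + Suc N) = A (Suc N)"
    using stable[of "Suc (Suc N)"] stable[of 1] by (simp add: add.commute)
  then show ?thesis unfolding A_def by blast
qed

definition class_ideal :: "('a::comm_monoid_add \<times> 'a) set \<Rightarrow> 'a \<Rightarrow> 'a set" where
  "class_ideal R z = {c. \<exists>d. (c, z + d) \<in> R}"

lemma congruence_rees_class_ideal:
  assumes R: "congruence R"
  shows "congruence (R \<union> class_ideal R z \<times> class_ideal R z)"
proof -
  have sat: "c \<in> class_ideal R z" if "(c, c') \<in> R" "c' \<in> class_ideal R z" for c c'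
    using that congruence_trans[OF R] unfolding class_ideal_def by blast
  have add: "c + e \<in> class_ideal R z" if "c \<in> class_ideal R z" for c e
    using that congruence_add_right[OF R] unfolding class_ideal_def by (fastforce simp: add.assoc)
  show ?thesis
  proof (rule congruenceI)
    fix a b c
    let ?I = "class_ideal R z"
    show "(a, a) \<in> R \<union> ?I \<times> ?I" using congruence_refl[OF R] by blast
    show "(b, a) \<in> R \<union> ?I \<times> ?I" if "(a, b) \<in> R \<union> ?I \<times> ?I"
      using that congruence_sym[OF R] by blast
    show "(a, c) \<in> R \<union> ?I \<times> ?I" if "(a, b) \<in> R \<union> ?I \<times> ?I" "(b, c) \<in> R \<union> ?I \<times> ?I"
      using that congruence_trans[OF R, of a b c] sat[of a b] sat[of c b] congruence_sym[OF R, of b c]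
      by blast
    show "(a + c, b + c) \<in> R \<union> ?I \<times> ?I" if "(a, b) \<in> R \<union> ?I \<times> ?I"
      using that congruence_add_right[OF R] add by blast
  qed
qed

lemma cong_colon_Int_rees:
  assumes R: "congruence R" and stable: "cong_colon R (z + z) = cong_colon R z"
  shows "cong_colon R z \<inter> (R \<union> class_ideal R z \<times> class_ideal R z) = R"
proof (intro equalityI subsetI)
  fix p assume "p \<in> R"
  then show "p \<in> cong_colon R z \<inter> (R \<union> class_ideal R z \<times> class_ideal R z)"
    using congruence_add_right[OF R] unfolding cong_colon_def by auto
next
  fix p assume p: "p \<in> cong_colon R z \<inter> (R \<union> class_ideal R z \<times> class_ideal R z)"
  show "p \<in> R"
  proof (cases "p \<in> R")
    case False
    then obtain x y d e where xy: "p = (x, y)" and d: "(x, z + d) \<in> R" and e: "(y, z + e) \<in> R"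
      using p unfolding class_ideal_def by auto
    have "(x + z, y + z) \<in> R" using p xy unfolding cong_colon_def by simp
    then have "(z + d + z, z + e + z) \<in> R"
      using congruence_add_right[OF R d, of z] congruence_add_right[OF R e, of z]
        congruence_sym[OF R] congruence_trans[OF R] by blast
    then have "(d, e) \<in> cong_colon R (z + z)" unfolding cong_colon_def by (simp add: ac_simps)
    then have "(z + d, z + e) \<in> R" using stable unfolding cong_colon_def by (simp add: add.commute)
    then show ?thesis using xy d e congruence_sym[OF R] congruence_trans[OF R] by blast
  qed
qed

text \<open>With \<open>q\<close> neither nilpotent nor cancellative and \<open>z = n q\<close> such that the colon
  \<open>(R : z)\<close> has stabilized, \<open>R\<close> is the intersection of \<open>(R : z)\<close> and the Rees congruence
  of the ideal generated by the class of \<open>z\<close>; both are strictly coarser than \<open>R\<close>.\<close>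
lemma non_primary_split:
  assumes fg: "finitely_generated TYPE('a::comm_monoid_add)"
    and R: "congruence (R :: ('a \<times> 'a) set)" and not_primary: "\<not> primary R"
  shows "\<exists>R1 R2. congruence R1 \<and> congruence R2 \<and> R \<subset> R1 \<and> R \<subset> R2 \<and> R1 \<inter> R2 = R"
proof -
  obtain q where not_nil: "\<not> quot_nilpotent R q" and not_canc: "\<not> quot_cancellative R q"
    using R not_primary unfolding primary_def by blast
  obtain n where "n > 0" and stable: "cong_colon R (nsum (n + n) q) = cong_colon R (nsum n q)"
    using cong_colon_stable[OF fg R] by blast
  then obtain n' where n': "n = Suc n'" using gr0_implies_Suc by blast
  define z where "z = nsum n q"
  define R1 where "R1 = cong_colon R z"
  define R2 where "R2 = R \<union> class_ideal R z \<times> class_ideal R z"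
  have "R \<subset> R1"
  proof -
    obtain a b where ab: "(q + a, q + b) \<in> R" "(a, b) \<notin> R"
      using not_canc unfolding quot_cancellative_def by blast
    have "(q + a + nsum n' q, q + b + nsum n' q) \<in> R"
      using congruence_add_right[OF R ab(1)] .
    then have "(a, b) \<in> R1"
      unfolding R1_def z_def cong_colon_def n' by (simp add: ac_simps)
    then show ?thesis
      using ab(2) subset_cong_colon[OF R] unfolding R1_def by blast
  qed
  moreover have "R \<subset> R2"
  proof -
    obtain m where m: "(m + z, z) \<notin> R"
      using not_nil unfolding quot_nilpotent_def quot_nil_def z_def by blast
    have "(z, z + 0) \<in> R" "(m + z, z + m) \<in> R"
      using congruence_refl[OF R] by (simp_all add: add.commute)
    then have "z \<in> class_ideal R z" "m + z \<in> class_ideal R z"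
      unfolding class_ideal_def by blast+
    then show ?thesis using m unfolding R2_def by blast
  qed
  moreover have "R1 \<inter> R2 = R"
    using cong_colon_Int_rees[OF R stable[unfolded nsum_add, folded z_def]]
    unfolding R1_def R2_def .
  moreover have "congruence R1" "congruence R2"
    unfolding R1_def R2_def
    using congruence_cong_colon[OF R] congruence_rees_class_ideal[OF R] by blast+
  ultimately show ?thesis by blast
qed

theorem primary_decomposition_exists:
  assumes fg: "finitely_generated TYPE('a::comm_monoid_add)"
    and R: "congruence (R :: ('a \<times> 'a) set)"
  shows "\<exists>\<C>. primary_decomposition R \<C>"
  using R
proof (induction R rule: wf_induct[OF wf_congruence_supset[OF fg]])
  case (1 R)
  show ?case
  proof (cases "primary R")
    case True
    then show ?thesis unfolding primary_decomposition_def by (intro exI[of _ "{R}"]) auto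
  next
    case False
    then obtain R1 R2 where R12: "congruence R1" "congruence R2" "R \<subset> R1" "R \<subset> R2"
      and R: "R1 \<inter> R2 = R"
      using non_primary_split[OF fg "1.prems"] by blast
    obtain \<C>1 \<C>2 where "primary_decomposition R1 \<C>1" "primary_decomposition R2 \<C>2"
      using "1.IH" "1.prems" R12 by (metis (no_types, lifting) case_prodI mem_Collect_eq)
    then have "primary_decomposition R (\<C>1 \<union> \<C>2)"
      using R unfolding primary_decomposition_def by auto
    then show ?thesis by blast
  qed
qed

theorem theorem4p12:
  fixes R :: "('a::comm_monoid_add \<times> 'a) set" and P :: "'a set"
  assumes "finitely_generated TYPE('a)"
    and "congruence R"
    and "prime_ideal P"
  shows "(associated_prime R P \<longleftrightarrow>
           (\<forall>\<C>. primary_decomposition R \<C> \<longrightarrow> (\<exists>C\<in>\<C>. P_primary C P))) \<and>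
         (\<not> associated_prime R P \<longrightarrow>
           (\<forall>\<C> C. primary_decomposition R \<C> \<and> C \<in> \<C> \<and> P_primary C P \<longrightarrow>
              primary_decomposition R (\<C> - {C})))"
proof -
  have redundant: "primary_decomposition R (\<C> - X)"
    if "\<not> associated_prime R P" "primary_decomposition R \<C>" "X \<subseteq> {C\<in>\<C>. P_primary C P}"
    for \<C> X
    using primary_decomposition_Diff[OF assms(1,3) that] .
  have "associated_prime R P"
    if all: "\<forall>\<C>. primary_decomposition R \<C> \<longrightarrow> (\<exists>C\<in>\<C>. P_primary C P)"
  proof (rule ccontr)
    assume not_assoc: "\<not> associated_prime R P"
    obtain \<C> where "primary_decomposition R \<C>"
      using primary_decomposition_exists[OF assms(1,2)] by blast
    then have "primary_decomposition R (\<C> - {C\<in>\<C>. P_primary C P})"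
      using redundant[OF not_assoc] by blast
    then show False using all by blast
  qed
  moreover have "\<forall>\<C>. primary_decomposition R \<C> \<longrightarrow> (\<exists>C\<in>\<C>. P_primary C P)"
    if "associated_prime R P"
    using associated_prime_has_component[OF assms(3) that] by blast
  ultimately show ?thesis using redundant by blast
qed

end
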